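(* Let $a,b,d<0$ and $c>0$ and let $\{W_n(z)\}_{n\ge0}$ be the normalised sequence defined below. Then \[ x_\Delta^-<x_A<0<x_B\qquad\text{and}\qquad x_A<x_\Delta^+<x_B, \] and $A(x_\Delta^-)>0>A(x_\Delta^+)$. For every $n\ge1$: $(-1)^{\lceil n/2\rceil}W_n(x_A)>0$, $(-1)^nW_n(x_B)<0$, and $W_n(x_\Delta^-)<0$. Furthermore: (i) If $c\le c^-$, then $x_\Delta^+\le x_g^-\le x_g^+<0$, $(-1)^nW_n(x_g^\pm)>0$ for $n\ge1$, and \[ (-1)^nW_n(x_\Delta^+)\begin{cases}<0,&\text{if }\Delta_\Delta>\Delta_g\text{ and }n>n^+,\\ =0,&\text{if }\Delta_\Delta>\Delta_g\text{ and }n=n^+,\\ >0,&\text{otherwise.}\end{cases} \] (ii) If $c\ge c^+$, then $x_B<x_g^-$, $W_n(x_g^\pm)>0$ for $n\ge1$, and $(-1)^nW_n(x_\Delta^+)<0$ for all $n\ge2$.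
   Context: Let $a,b,c,d\in\mathbb{R}$ with $ac\ne0$, and put $A(z)=az+b$, $B(z)=cz+d$. The normalised sequence $\{W_n(z)\}_{n\ge0}$ is defined by $W_0(z)=1$, $W_1(z)=z$ and $W_n(z)=A(z)W_{n-1}(z)+B(z)W_{n-2}(z)$ for $n\ge2$. Notation (for $a,b,d<0<c$): - $\Delta_\Delta=-a^2d+abc+c^2$ (which is $>0$) and $x_\Delta^\pm=\dfrac{-ab-2c\pm2\sqrt{\Delta_\Delta}}{a^2}$ (zeros of $A(z)^2+4B(z)$). - $g(z)=(1-a)z^2-(b+c)z-d$, $\Delta_g=(b+c)^2+4d(1-a)$, $x_g^\pm=\dfrac{b+c\pm\sqrt{\Delta_g}}{2(1-a)}$ (zeros of $g$, real iff $c\le c^-$ or $c\ge c^+$). - $c^\pm=\pm2\sqrt{d(a-1)}-b$. - $x_A=-b/a$, $x_B=-d/c$, $h(z)=(2-a)z-b$, $n^+=-A(x_\Delta^+)/h(x_\Delta^+)$ (defined when $h(x_\Delta^+)\neq0$, in particular when $\Delta_\Delta>\Delta_g$). *)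

theory Defs
  imports Complex_Main
begin

fun W :: "real \<Rightarrow> real \<Rightarrow> real \<Rightarrow> real \<Rightarrow> nat \<Rightarrow> real \<Rightarrow> real" where
  "W a b c d 0 z = 1"
| "W a b c d (Suc 0) z = z"
| "W a b c d (Suc (Suc n)) z =
     (a * z + b) * W a b c d (Suc n) z + (c * z + d) * W a b c d n z"

definition DeltaD :: "real \<Rightarrow> real \<Rightarrow> real \<Rightarrow> real \<Rightarrow> real" where
  "DeltaD a b c d = - (a^2 * d) + a * b * c + c^2"

definition xDp :: "real \<Rightarrow> real \<Rightarrow> real \<Rightarrow> real \<Rightarrow> real" where
  "xDp a b c d = (- a * b - 2 * c + 2 * sqrt (DeltaD a b c d)) / a^2"

definition xDm :: "real \<Rightarrow> real \<Rightarrow> real \<Rightarrow> real \<Rightarrow> real" where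
  "xDm a b c d = (- a * b - 2 * c - 2 * sqrt (DeltaD a b c d)) / a^2"

definition Deltag :: "real \<Rightarrow> real \<Rightarrow> real \<Rightarrow> real \<Rightarrow> real" where
  "Deltag a b c d = (b + c)^2 + 4 * d * (1 - a)"

definition xgp :: "real \<Rightarrow> real \<Rightarrow> real \<Rightarrow> real \<Rightarrow> real" where
  "xgp a b c d = (b + c + sqrt (Deltag a b c d)) / (2 * (1 - a))"

definition xgm :: "real \<Rightarrow> real \<Rightarrow> real \<Rightarrow> real \<Rightarrow> real" where
  "xgm a b c d = (b + c - sqrt (Deltag a b c d)) / (2 * (1 - a))"

definition cp :: "real \<Rightarrow> real \<Rightarrow> real \<Rightarrow> real" where
  "cp a b d = 2 * sqrt (d * (a - 1)) - b"

definition cm :: "real \<Rightarrow> real \<Rightarrow> real \<Rightarrow> real" where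
  "cm a b d = - 2 * sqrt (d * (a - 1)) - b"

definition xA :: "real \<Rightarrow> real \<Rightarrow> real" where
  "xA a b = - b / a"

definition xB :: "real \<Rightarrow> real \<Rightarrow> real" where
  "xB c d = - d / c"

definition h :: "real \<Rightarrow> real \<Rightarrow> real \<Rightarrow> real" where
  "h a b z = (2 - a) * z - b"

definition nplus :: "real \<Rightarrow> real \<Rightarrow> real \<Rightarrow> real \<Rightarrow> real" where
  "nplus a b c d = - (a * xDp a b c d + b) / h a b (xDp a b c d)"

end

theory Submission
  imports Defs
begin

text \<open>At each distinguished point the recurrence has a closed form. At \<open>x\<^sub>A\<close> and \<open>x\<^sub>B\<close>,
  where \<open>A\<close> resp. \<open>B\<close> vanishes, it becomes geometric. At the zeros \<open>x\<^sub>\<Delta>\<^sup>\<plusminus>\<close> of \<open>A\<^sup>2 + 4B\<close>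
  the characteristic polynomial \<open>t\<^sup>2 - A t - B\<close> has the double root \<open>p = A/2\<close>, so
  \<open>W\<^sub>n = p\<^sup>n\<^sup>-\<^sup>1 (p + n (z - p))\<close>; at the zeros \<open>x\<^sub>g\<^sup>\<plusminus>\<close> of \<open>g(z) = z\<^sup>2 - A(z) z - B(z)\<close> the point
  \<open>z\<close> is itself a characteristic root and \<open>W\<^sub>n = z\<^sup>n\<close>. The sign claims then reduce to the relative
  position of these points, read off from the factorisations of \<open>A\<^sup>2 + 4B\<close> and of \<open>g\<close>, and, for the
  threshold \<open>n\<^sup>+\<close>, to the sign of \<open>q = x\<^sub>\<Delta>\<^sup>+ - p\<close>, which multiplication by a positive conjugate
  identifies with the sign of \<open>\<Delta>\<^sub>\<Delta> - \<Delta>\<^sub>g\<close>.\<close>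

lemma W_double_root:
  assumes "a * z + b = 2 * p" "c * z + d = - (p^2)"
  shows "W a b c d n z = p^n + real n * (z - p) * p^(n - 1)"
  using assms
proof (induction a b c d n z rule: W.induct)
  case (3 a b c d n z)
  have "W a b c d (Suc (Suc n)) z = 2 * p * W a b c d (Suc n) z - p^2 * W a b c d n z"
    using "3.prems" by simp
  also have "\<dots> = p^Suc (Suc n) + real (Suc (Suc n)) * (z - p) * p^Suc n"
    using 3 by (cases n) (simp_all only: diff_Suc_1, simp_all add: algebra_simps power2_eq_square)
  finally show ?case by simp
qed auto

lemma W_char_root:
  assumes "z^2 = (a * z + b) * z + (c * z + d)"
  shows "W a b c d n z = z^n"
  using assms
proof (induction a b c d n z rule: W.induct)
  case (3 a b c d n z)
  then have "W a b c d (Suc (Suc n)) z = ((a * z + b) * z + (c * z + d)) * z^n"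
    by (simp add: algebra_simps)
  also have "\<dots> = z^Suc (Suc n)"
    using "3.prems" by (simp add: power2_eq_square)
  finally show ?case .
qed auto

lemma W_A_zero:
  assumes "a * z + b = 0"
  shows "W a b c d n z = (c * z + d)^(n div 2) * z^(n mod 2)"
  using assms by (induction a b c d n z rule: W.induct) auto

lemma W_B_zero:
  assumes "c * z + d = 0"
  shows "W a b c d (Suc n) z = (a * z + b)^n * z"
proof (induction n rule: nat_less_induct)
  case (1 n)
  then show ?case using assms by (cases n) auto
qed

lemma neg_one_pow_ceiling_half_pos:
  fixes y z :: real
  assumes "y < 0" "z < 0"
  shows "(-1) ^ nat \<lceil>real n / 2\<rceil> * (y^(n div 2) * z^(n mod 2)) > 0"
proof (cases "even n")
  case True
  then obtain k where k: "n = 2 * k" by blast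
  have "\<lceil>real n / 2\<rceil> = int k" unfolding k by simp
  then have "nat \<lceil>real n / 2\<rceil> = k" by simp
  moreover have "(-1) ^ k * y^k = (-y)^k" by (rule power_minus[symmetric])
  moreover have "(-y)^k > 0" using assms by simp
  ultimately show ?thesis using k by simp
next
  case False
  then obtain k where k: "n = 2 * k + 1" using oddE by blast
  have "\<lceil>real n / 2\<rceil> = int k + 1" unfolding k ceiling_eq_iff by simp
  then have "nat \<lceil>real n / 2\<rceil> = Suc k" by simp
  moreover have "n div 2 = k" "n mod 2 = 1" using k by auto
  moreover have "(-1) ^ k * y^k = (-y)^k" by (rule power_minus[symmetric])
  moreover have "(-y)^k * (-z) > 0" using assms by (intro mult_pos_pos) auto
  ultimately show ?thesis by (simp add: algebra_simps)
qed

lemma neg_one_pow_Suc_mult: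
  fixes x y :: "'a :: comm_ring_1"
  shows "(-1) ^ Suc k * (x^k * y) = - ((- x)^k * y)"
  unfolding power_minus[of x] by simp

lemma A_B_at_discriminant_root:
  fixes a b c d t :: real
  assumes "a \<noteq> 0" "t^2 = DeltaD a b c d"
  defines "z \<equiv> (- a * b - 2 * c + 2 * t) / a^2"
  shows "a * z + b = 2 * ((t - c) / a)" "c * z + d = - (((t - c) / a)^2)"
proof -
  have z: "a^2 * z = - a * b - 2 * c + 2 * t" unfolding z_def using assms(1) by simp
  show "a * z + b = 2 * ((t - c) / a)"
    using z assms(1) by (simp add: field_simps power2_eq_square)
  have "a^2 * (c * z + d) = c * (a^2 * z) + a^2 * d" by (simp add: algebra_simps)
  also have "\<dots> = - ((t - c)^2)"
    unfolding z using assms(2) by (simp add: DeltaD_def algebra_simps power2_eq_square)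
  finally have "a^2 * (c * z + d) = - ((t - c)^2)" .
  then show "c * z + d = - (((t - c) / a)^2)"
    using assms(1) by (simp add: field_simps power2_eq_square)
qed

lemma A_sq_plus_4B_factor:
  fixes a b c d z :: real
  assumes "a \<noteq> 0" "0 \<le> DeltaD a b c d"
  shows "(a * z + b)^2 + 4 * (c * z + d) = a^2 * (z - xDm a b c d) * (z - xDp a b c d)"
proof -
  define s where "s = sqrt (DeltaD a b c d)"
  have s2: "s^2 = c^2 + a * b * c - a^2 * d" using assms(2) unfolding s_def DeltaD_def by simp
  have "a^2 * xDm a b c d = - a * b - 2 * c - 2 * s" "a^2 * xDp a b c d = - a * b - 2 * c + 2 * s"
    using assms(1) unfolding xDm_def xDp_def s_def by simp_all
  then have roots: "a^2 * (z - xDm a b c d) = a^2 * z + a * b + 2 * c + 2 * s"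
    "a^2 * (z - xDp a b c d) = a^2 * z + a * b + 2 * c - 2 * s"
    by (simp_all add: right_diff_distrib)
  have "a^2 * (a^2 * (z - xDm a b c d) * (z - xDp a b c d))
      = (a^2 * (z - xDm a b c d)) * (a^2 * (z - xDp a b c d))"
    by (simp add: algebra_simps)
  also have "\<dots> = (a^2 * z + a * b + 2 * c + 2 * s) * (a^2 * z + a * b + 2 * c - 2 * s)"
    unfolding roots ..
  also have "\<dots> = (a^2 * z + a * b + 2 * c)^2 - (2 * s)^2"
    by (simp only: power2_eq_square square_diff_square_factored)
  also have "\<dots> = a^2 * ((a * z + b)^2 + 4 * (c * z + d))"
    unfolding power_mult_distrib s2 by (simp add: algebra_simps power2_eq_square)
  finally show ?thesis using assms(1) by simp
qed

lemma g_factor: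
  fixes a b c d z :: real
  assumes "a \<noteq> 1" "0 \<le> Deltag a b c d"
  shows "(1 - a) * z^2 - (b + c) * z - d = (1 - a) * (z - xgm a b c d) * (z - xgp a b c d)"
proof -
  define t where "t = sqrt (Deltag a b c d)"
  have t2: "t^2 = (b + c)^2 + 4 * d * (1 - a)" using assms(2) unfolding t_def Deltag_def by simp
  have "2 * (1 - a) * xgm a b c d = b + c - t" "2 * (1 - a) * xgp a b c d = b + c + t"
    using assms(1) unfolding xgm_def xgp_def t_def by simp_all
  then have roots: "2 * (1 - a) * (z - xgm a b c d) = 2 * (1 - a) * z - (b + c) + t"
    "2 * (1 - a) * (z - xgp a b c d) = 2 * (1 - a) * z - (b + c) - t"
    by (simp_all add: right_diff_distrib)
  have "4 * (1 - a) * ((1 - a) * (z - xgm a b c d) * (z - xgp a b c d))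
      = (2 * (1 - a) * (z - xgm a b c d)) * (2 * (1 - a) * (z - xgp a b c d))"
    by (simp add: algebra_simps)
  also have "\<dots> = (2 * (1 - a) * z - (b + c) + t) * (2 * (1 - a) * z - (b + c) - t)"
    unfolding roots ..
  also have "\<dots> = (2 * (1 - a) * z - (b + c))^2 - t^2"
    by (simp only: power2_eq_square square_diff_square_factored)
  also have "\<dots> = 4 * (1 - a) * ((1 - a) * z^2 - (b + c) * z - d)"
    unfolding t2 by (simp add: algebra_simps power2_eq_square)
  finally show ?thesis using assms(1) by simp
qed

lemma g_roots_char_root:
  fixes a b c d z :: real
  assumes "a \<noteq> 1" "0 \<le> Deltag a b c d" "z = xgm a b c d \<or> z = xgp a b c d"
  shows "z^2 = (a * z + b) * z + (c * z + d)"
proof -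
  have "(1 - a) * z^2 - (b + c) * z - d = 0"
    using g_factor[OF assms(1,2), of z] assms(3) by auto
  then show ?thesis by (simp add: algebra_simps power2_eq_square)
qed

lemma xgm_le_xgp:
  fixes a b c d :: real
  assumes "a < 1" "0 \<le> Deltag a b c d"
  shows "xgm a b c d \<le> xgp a b c d"
  unfolding xgm_def xgp_def using assms by (intro divide_right_mono) auto

locale abd_neg_c_pos =
  fixes a b c d :: real
  assumes a_neg: "a < 0" and b_neg: "b < 0" and d_neg: "d < 0" and c_pos: "0 < c"
begin

text \<open>\<open>pDp\<close> and \<open>pDm\<close> are the double roots \<open>A(z)/2\<close> of \<open>t\<^sup>2 = A(z) t + B(z)\<close> at \<open>z = x\<^sub>\<Delta>\<^sup>\<plusminus>\<close>,
  \<open>qDp\<close> is the slope in \<open>W\<^sub>n(x\<^sub>\<Delta>\<^sup>+) = pDp\<^sup>n\<^sup>-\<^sup>1 (pDp + n qDp)\<close>, and \<open>c\<^sup>\<plusminus> = \<plusminus>2 r - b\<close>.\<close>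

definition sD :: real where "sD = sqrt (DeltaD a b c d)"

definition pDp :: real where "pDp = (sD - c) / a"

definition pDm :: real where "pDm = (- sD - c) / a"

definition qDp :: real where "qDp = xDp a b c d - pDp"

definition r :: real where "r = sqrt (d * (a - 1))"

lemma c_sq_lt_DeltaD: "c^2 < DeltaD a b c d"
proof -
  have "0 < a * b * c" using a_neg b_neg c_pos by (simp add: mult_neg_neg)
  moreover have "a^2 * d < 0" using a_neg d_neg by (simp add: mult_pos_neg)
  ultimately show ?thesis unfolding DeltaD_def by linarith
qed

lemma DeltaD_pos: "0 < DeltaD a b c d"
  using c_sq_lt_DeltaD c_pos by (meson order.strict_trans zero_less_power)

lemma sD_sq: "sD^2 = DeltaD a b c d"
  unfolding sD_def using DeltaD_pos by simp

lemma c_lt_sD: "c < sD"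
  unfolding sD_def using c_sq_lt_DeltaD by (rule real_less_rsqrt)

lemma pDp_neg: "pDp < 0"
  unfolding pDp_def using c_lt_sD a_neg by (simp add: divide_pos_neg)

lemma pDm_pos: "0 < pDm"
  unfolding pDm_def using c_lt_sD c_pos a_neg by (simp add: divide_neg_neg)

lemma A_xDp: "a * xDp a b c d + b = 2 * pDp"
  and B_xDp: "c * xDp a b c d + d = - (pDp^2)"
  using A_B_at_discriminant_root[of a sD b c d] a_neg sD_sq
  unfolding xDp_def pDp_def sD_def by simp_all

lemma A_xDm: "a * xDm a b c d + b = 2 * pDm"
  and B_xDm: "c * xDm a b c d + d = - (pDm^2)"
proof -
  have "(- sD)^2 = DeltaD a b c d" using sD_sq by simp
  then show "a * xDm a b c d + b = 2 * pDm" "c * xDm a b c d + d = - (pDm^2)"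
    using A_B_at_discriminant_root[of a "- sD" b c d] a_neg
    unfolding xDm_def pDm_def sD_def by simp_all
qed

lemma xDm_le_xDp: "xDm a b c d \<le> xDp a b c d"
  unfolding xDm_def xDp_def sD_def[symmetric] using c_lt_sD c_pos
  by (intro divide_right_mono) auto

lemma A_sq_plus_4B_eq:
  "(a * z + b)^2 + 4 * (c * z + d) = a^2 * (z - xDm a b c d) * (z - xDp a b c d)"
  by (rule A_sq_plus_4B_factor) (use a_neg DeltaD_pos in auto)

lemma xA_neg: "xA a b < 0"
  unfolding xA_def using a_neg b_neg by (simp add: divide_neg_neg)

lemma xB_pos: "0 < xB c d"
  unfolding xB_def using c_pos d_neg by (simp add: divide_neg_pos)

lemma A_xA: "a * xA a b + b = 0"
  unfolding xA_def using a_neg by simp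

lemma B_xA_neg: "c * xA a b + d < 0"
  using xA_neg c_pos d_neg by (simp add: mult_pos_neg add_neg_neg)

lemma B_xB: "c * xB c d + d = 0"
  unfolding xB_def using c_pos by simp

lemma A_xB_neg: "a * xB c d + b < 0"
  using xB_pos a_neg b_neg by (simp add: mult_neg_pos add_neg_neg)

text \<open>At \<open>x\<^sub>A\<close> the discriminant \<open>A\<^sup>2 + 4B\<close> reduces to \<open>4B < 0\<close>, at \<open>x\<^sub>B\<close> to \<open>A\<^sup>2 > 0\<close>.\<close>

lemma xDm_lt_xA_lt_xDp: "xDm a b c d < xA a b \<and> xA a b < xDp a b c d"
proof -
  have "a^2 * ((xA a b - xDm a b c d) * (xA a b - xDp a b c d)) < 0"
    using A_sq_plus_4B_eq[of "xA a b"] A_xA B_xA_neg by (simp add: mult.assoc)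
  then have "(xA a b - xDm a b c d) * (xA a b - xDp a b c d) < 0"
    using a_neg by (simp add: mult_less_0_iff)
  then show ?thesis using xDm_le_xDp by (auto simp: mult_less_0_iff)
qed

lemma xDp_lt_xB: "xDp a b c d < xB c d"
proof -
  have "(a * xB c d + b)^2 = a^2 * ((xB c d - xDm a b c d) * (xB c d - xDp a b c d))"
    using A_sq_plus_4B_eq[of "xB c d"] B_xB by (simp add: mult.assoc)
  moreover have "0 < (a * xB c d + b)^2" using A_xB_neg by simp
  ultimately have "0 < a^2 * ((xB c d - xDm a b c d) * (xB c d - xDp a b c d))" by linarith
  moreover have "xDm a b c d < xB c d" using xDm_lt_xA_lt_xDp xA_neg xB_pos by linarith
  ultimately show ?thesis by (simp add: zero_less_mult_iff)
qed

lemma W_xA_sign: "(-1) ^ nat \<lceil>real n / 2\<rceil> * W a b c d n (xA a b) > 0"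
  unfolding W_A_zero[OF A_xA] using B_xA_neg xA_neg by (rule neg_one_pow_ceiling_half_pos)

lemma W_xB_sign:
  assumes "1 \<le> n"
  shows "(-1) ^ n * W a b c d n (xB c d) < 0"
proof -
  obtain k where n: "n = Suc k" using assms by (cases n) auto
  have "(-1) ^ n * W a b c d n (xB c d) = - ((- (a * xB c d + b))^k * xB c d)"
    unfolding n W_B_zero[OF B_xB] by (rule neg_one_pow_Suc_mult)
  moreover have "0 < (- (a * xB c d + b))^k * xB c d"
    using A_xB_neg xB_pos by simp
  ultimately show ?thesis by simp
qed

lemma W_xDm_neg:
  assumes "1 \<le> n"
  shows "W a b c d n (xDm a b c d) < 0"
proof -
  obtain k where n: "n = Suc k" using assms by (cases n) auto
  have xDm_neg: "xDm a b c d < 0" using xDm_lt_xA_lt_xDp xA_neg by linarith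
  have "W a b c d n (xDm a b c d) = pDm^k * (pDm + real n * (xDm a b c d - pDm))"
    unfolding W_double_root[OF A_xDm B_xDm] n by (simp add: algebra_simps)
  moreover have "pDm + real n * (xDm a b c d - pDm) < 0"
  proof -
    have "real n * (xDm a b c d - pDm) \<le> 1 * (xDm a b c d - pDm)"
      using assms xDm_neg pDm_pos by (intro mult_right_mono_neg) auto
    then show ?thesis using xDm_neg by simp
  qed
  ultimately show ?thesis using pDm_pos by (simp add: mult_pos_neg)
qed

lemma neg_one_pow_W_xDp:
  assumes "1 \<le> n"
  shows "(-1) ^ n * W a b c d n (xDp a b c d) = - ((- pDp)^(n - 1) * (pDp + real n * qDp))"
proof -
  obtain k where n: "n = Suc k" using assms by (cases n) auto
  have "W a b c d n (xDp a b c d) = pDp^k * (pDp + real n * qDp)"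
    unfolding W_double_root[OF A_xDp B_xDp] n qDp_def by (simp add: algebra_simps)
  then have "(-1) ^ n * W a b c d n (xDp a b c d)
      = (-1) ^ Suc k * (pDp^k * (pDp + real n * qDp))"
    unfolding n by simp
  also have "\<dots> = - ((- pDp)^k * (pDp + real n * qDp))"
    by (rule neg_one_pow_Suc_mult)
  finally show ?thesis unfolding n by simp
qed

lemma a_pDp: "a * pDp = sD - c"
  using a_neg unfolding pDp_def by simp

lemma a_sq_qDp: "a^2 * qDp = (2 - a) * sD - (a * b + (2 - a) * c)"
proof -
  have xDp: "a^2 * xDp a b c d = - a * b - 2 * c + 2 * sD"
    using a_neg unfolding xDp_def sD_def by simp
  have "a^2 * qDp = a^2 * xDp a b c d - a * (a * pDp)"
    unfolding qDp_def by (simp add: algebra_simps power2_eq_square)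
  also have "\<dots> = (2 - a) * sD - (a * b + (2 - a) * c)"
    unfolding xDp a_pDp by (simp add: algebra_simps)
  finally show ?thesis .
qed

lemma qDp_mult_conjugate:
  "qDp * ((2 - a) * sD + (a * b + (2 - a) * c)) = DeltaD a b c d - Deltag a b c d"
proof -
  have "a^2 * (qDp * ((2 - a) * sD + (a * b + (2 - a) * c)))
      = ((2 - a) * sD - (a * b + (2 - a) * c)) * ((2 - a) * sD + (a * b + (2 - a) * c))"
    unfolding a_sq_qDp[symmetric] by (simp add: mult.assoc)
  also have "\<dots> = (2 - a)^2 * sD^2 - (a * b + (2 - a) * c)^2"
    by (simp add: algebra_simps power2_eq_square)
  also have "\<dots> = a^2 * (DeltaD a b c d - Deltag a b c d)"
    unfolding sD_sq by (simp add: DeltaD_def Deltag_def algebra_simps power2_eq_square)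
  finally show ?thesis using a_neg by simp
qed

lemma qDp_pos_iff: "0 < qDp \<longleftrightarrow> Deltag a b c d < DeltaD a b c d"
proof -
  have "0 < (2 - a) * sD + (a * b + (2 - a) * c)"
    using a_neg b_neg c_pos c_lt_sD by (simp add: mult_neg_neg add_pos_pos)
  then show ?thesis using qDp_mult_conjugate by (smt (verit) mult_less_0_iff zero_less_mult_iff)
qed

lemma nplus_eq: "nplus a b c d = - pDp / qDp"
proof -
  have "h a b (xDp a b c d) = 2 * qDp"
    using A_xDp unfolding h_def qDp_def by (simp add: algebra_simps)
  then show ?thesis unfolding nplus_def A_xDp by simp
qed

lemma W_xDp_neg_beyond_nplus:
  assumes "1 \<le> n" "Deltag a b c d < DeltaD a b c d" "nplus a b c d < real n"
  shows "(-1) ^ n * W a b c d n (xDp a b c d) < 0"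
proof -
  have "0 < qDp" using assms(2) qDp_pos_iff by simp
  then have "0 < pDp + real n * qDp" using assms(3) unfolding nplus_eq by (simp add: field_simps)
  then show ?thesis unfolding neg_one_pow_W_xDp[OF assms(1)] using pDp_neg by simp
qed

lemma W_xDp_zero_at_nplus:
  assumes "1 \<le> n" "Deltag a b c d < DeltaD a b c d" "real n = nplus a b c d"
  shows "(-1) ^ n * W a b c d n (xDp a b c d) = 0"
proof -
  have "0 < qDp" using assms(2) qDp_pos_iff by simp
  then have "pDp + real n * qDp = 0" using assms(3) unfolding nplus_eq by (simp add: field_simps)
  then show ?thesis unfolding neg_one_pow_W_xDp[OF assms(1)] by simp
qed

lemma W_xDp_pos_before_nplus:
  assumes "1 \<le> n" "\<not> (Deltag a b c d < DeltaD a b c d \<and> nplus a b c d \<le> real n)"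
  shows "(-1) ^ n * W a b c d n (xDp a b c d) > 0"
proof -
  have "pDp + real n * qDp < 0"
  proof (cases "Deltag a b c d < DeltaD a b c d")
    case True
    then have "0 < qDp" "real n < - pDp / qDp" using assms(2) qDp_pos_iff nplus_eq by auto
    then show ?thesis by (simp add: field_simps)
  next
    case False
    then have "real n * qDp \<le> 0" using qDp_pos_iff by (simp add: mult_nonneg_nonpos)
    then show ?thesis using pDp_neg by simp
  qed
  then show ?thesis unfolding neg_one_pow_W_xDp[OF assms(1)] using pDp_neg by (simp add: mult_pos_neg)
qed

lemma r_pos: "0 < r"
  unfolding r_def using a_neg d_neg by (simp add: mult_neg_neg)

lemma r_sq: "r^2 = d * (a - 1)"
  unfolding r_def using a_neg d_neg by (simp add: mult_neg_neg less_imp_le)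

lemma Deltag_eq: "Deltag a b c d = (b + c)^2 - (2 * r)^2"
  unfolding Deltag_def power_mult_distrib r_sq by (simp add: algebra_simps)

lemma cm_eq: "cm a b d = - 2 * r - b" and cp_eq: "cp a b d = 2 * r - b"
  unfolding cm_def cp_def r_def by simp_all

lemma Deltag_nonneg:
  assumes "c \<le> cm a b d \<or> cp a b d \<le> c"
  shows "0 \<le> Deltag a b c d"
proof -
  have "2 * r \<le> \<bar>b + c\<bar>" using assms unfolding cm_eq cp_eq by auto
  then have "(2 * r)^2 \<le> \<bar>b + c\<bar>^2" using r_pos by (intro power_mono) auto
  then show ?thesis unfolding Deltag_eq by simp
qed

lemma W_xg:
  assumes "c \<le> cm a b d \<or> cp a b d \<le> c" "z = xgm a b c d \<or> z = xgp a b c d"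
  shows "W a b c d n z = z^n"
  using a_neg g_roots_char_root[OF _ Deltag_nonneg[OF assms(1)] assms(2)] by (intro W_char_root) simp

lemma xgm_le_xgp_c_outside:
  assumes "c \<le> cm a b d \<or> cp a b d \<le> c"
  shows "xgm a b c d \<le> xgp a b c d"
  using xgm_le_xgp a_neg Deltag_nonneg[OF assms] by simp

lemma xgp_neg:
  assumes "c \<le> cm a b d"
  shows "xgp a b c d < 0"
proof -
  have bc: "b + c < 0" using assms r_pos unfolding cm_eq by simp
  have "Deltag a b c d < (b + c)^2" unfolding Deltag_eq using r_pos by simp
  then have "sqrt (Deltag a b c d) < \<bar>b + c\<bar>" by (metis real_sqrt_abs real_sqrt_less_mono)
  then have "b + c + sqrt (Deltag a b c d) < 0" using bc by simp
  then show ?thesis unfolding xgp_def using a_neg by (simp add: divide_neg_pos)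
qed

text \<open>A negative root \<open>z\<close> of \<open>g\<close> has \<open>A(z) z = z\<^sup>2 - B(z) > 0\<close>, so \<open>A(z) < 0\<close> and \<open>z > x\<^sub>A > x\<^sub>\<Delta>\<^sup>-\<close>;
  moreover \<open>A(z)\<^sup>2 + 4 B(z) = (2 z - A(z))\<^sup>2 \<ge> 0\<close>, so \<open>z\<close> is not between the roots of \<open>A\<^sup>2 + 4B\<close>.\<close>

lemma xDp_le_xgm:
  assumes "c \<le> cm a b d"
  shows "xDp a b c d \<le> xgm a b c d"
proof -
  define z where "z = xgm a b c d"
  have z_neg: "z < 0" using xgp_neg[OF assms] xgm_le_xgp_c_outside assms unfolding z_def by fastforce
  have root: "z^2 = (a * z + b) * z + (c * z + d)"
    using g_roots_char_root[OF _ Deltag_nonneg] a_neg assms unfolding z_def by simp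
  have "c * z < 0" using z_neg c_pos by (simp add: mult_pos_neg)
  then have "c * z + d < 0" using d_neg by simp
  then have "0 < (a * z + b) * z" using root by (smt (verit) zero_le_power2)
  then have "a * z + b < 0" using z_neg by (simp add: zero_less_mult_iff)
  then have "xA a b < z" unfolding xA_def using a_neg by (simp add: field_simps)
  then have "0 < z - xDm a b c d" using xDm_lt_xA_lt_xDp by simp
  moreover have "(a * z + b)^2 + 4 * (c * z + d) = (2 * z - (a * z + b))^2"
    using root by (simp add: algebra_simps power2_eq_square)
  then have "0 \<le> (a * z + b)^2 + 4 * (c * z + d)" by simp
  then have "0 \<le> a^2 * ((z - xDm a b c d) * (z - xDp a b c d))"
    using A_sq_plus_4B_eq[of z] by (metis mult.assoc)
  ultimately show ?thesis unfolding z_def[symmetric] using a_neg by (simp add: zero_le_mult_iff)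
qed

lemma neg_one_pow_W_xg_pos:
  assumes "c \<le> cm a b d" "z = xgm a b c d \<or> z = xgp a b c d"
  shows "(-1) ^ n * W a b c d n z > 0"
proof -
  have "z < 0" using assms(2) xgp_neg[OF assms(1)] xgm_le_xgp_c_outside assms(1) by fastforce
  moreover have "(-1) ^ n * W a b c d n z = (- z)^n"
    unfolding W_xg[OF disjI1[OF assms(1)] assms(2)] power_minus[of z] by simp
  ultimately show ?thesis by simp
qed

text \<open>Since \<open>B(x\<^sub>B) = 0\<close>, \<open>g(x\<^sub>B) = x\<^sub>B (x\<^sub>B - A(x\<^sub>B)) > 0\<close>, and \<open>x\<^sub>B\<close> lies left of the vertex of \<open>g\<close>.\<close>

lemma xB_lt_xgm:
  assumes "cp a b d \<le> c"
  shows "xB c d < xgm a b c d"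
proof -
  define z where "z = xB c d"
  have bc: "2 * r \<le> b + c" using assms unfolding cp_eq by simp
  have "0 < z * (z - (a * z + b))" using xB_pos A_xB_neg unfolding z_def by simp
  also have "z * (z - (a * z + b)) = (1 - a) * z^2 - (b + c) * z - d"
    using B_xB unfolding z_def[symmetric] by (simp add: algebra_simps power2_eq_square)
  also have "\<dots> = (1 - a) * ((z - xgm a b c d) * (z - xgp a b c d))"
    using g_factor[OF _ Deltag_nonneg[OF disjI2[OF assms]]] a_neg by (simp add: mult.assoc)
  finally have g_pos: "0 < (z - xgm a b c d) * (z - xgp a b c d)"
    using a_neg by (simp add: zero_less_mult_iff)
  have "(2 * r)^2 \<le> (b + c)^2" using bc r_pos by (intro power_mono) auto
  moreover have "(b + c)^2 \<le> c * (b + c)"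
    using bc r_pos b_neg by (simp add: power2_eq_square mult_right_mono)
  moreover have "(2 * r)^2 = - 4 * d * (1 - a)" unfolding power_mult_distrib r_sq by (simp add: algebra_simps)
  moreover have "0 < - d * (1 - a)" using a_neg d_neg by (simp add: mult_neg_pos)
  ultimately have "- d * (2 * (1 - a)) < c * (b + c)" by linarith
  then have "z < (b + c) / (2 * (1 - a))"
    unfolding z_def xB_def using a_neg c_pos by (simp add: field_simps)
  also have "\<dots> \<le> xgp a b c d"
    unfolding xgp_def using a_neg Deltag_nonneg assms by (intro divide_right_mono) auto
  finally have "z < xgp a b c d" .
  then show ?thesis using g_pos unfolding z_def[symmetric] by (simp add: zero_less_mult_iff)
qed

lemma W_xg_pos:
  assumes "cp a b d \<le> c" "z = xgm a b c d \<or> z = xgp a b c d"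
  shows "0 < W a b c d n z"
proof -
  have "0 < z" using assms(2) xB_lt_xgm[OF assms(1)] xB_pos xgm_le_xgp_c_outside assms(1) by fastforce
  then show ?thesis unfolding W_xg[OF disjI2[OF assms(1)] assms(2)] by simp
qed

text \<open>With \<open>r\<^sup>2 = d (a - 1)\<close>, \<open>(1 - a)(\<Delta>\<^sub>\<Delta> - \<Delta>\<^sub>g)\<close> is a positive square plus a nonnegative multiple
  of \<open>c + b - 2 r = c - c\<^sup>+\<close>; the same completion of squares handles \<open>pDp + 2 qDp\<close>.\<close>

lemma Deltag_lt_DeltaD:
  assumes "cp a b d \<le> c"
  shows "Deltag a b c d < DeltaD a b c d"
proof -
  have "(r * (2 - a) - b * (1 - a))^2
      = r^2 * (2 - a)^2 - 2 * r * (2 - a) * b * (1 - a) + b^2 * (1 - a)^2"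
    by (simp add: algebra_simps power2_eq_square)
  then have key: "(1 - a) * (DeltaD a b c d - Deltag a b c d)
      = (r * (2 - a) - b * (1 - a))^2 + (- b) * (1 - a) * (2 - a) * (c + b - 2 * r)"
    unfolding r_sq by (simp add: DeltaD_def Deltag_def algebra_simps power2_eq_square)
  have "0 < r * (2 - a) - b * (1 - a)"
    using r_pos a_neg b_neg by (smt (verit) mult_pos_pos mult_neg_pos)
  then have "0 < (r * (2 - a) - b * (1 - a))^2" by simp
  moreover have "0 \<le> (- b) * (1 - a) * (2 - a) * (c + b - 2 * r)"
    using assms a_neg b_neg unfolding cp_eq by (intro mult_nonneg_nonneg) auto
  ultimately have "0 < (1 - a) * (DeltaD a b c d - Deltag a b c d)" unfolding key by linarith
  then show ?thesis using a_neg by (simp add: zero_less_mult_iff)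
qed

lemma pDp_plus_2qDp_pos:
  assumes "cp a b d \<le> c"
  shows "0 < pDp + 2 * qDp"
proof -
  define F where "F = - d * (4 - a)^2 - b * c * (4 - a) - 4 * b^2"
  have "a^2 * (pDp + 2 * qDp) = a * (a * pDp) + 2 * (a^2 * qDp)"
    by (simp add: algebra_simps power2_eq_square)
  also have "\<dots> = (4 - a) * sD - (2 * a * b + (4 - a) * c)"
    unfolding a_pDp a_sq_qDp by (simp add: algebra_simps)
  finally have "a^2 * (pDp + 2 * qDp) = (4 - a) * sD - (2 * a * b + (4 - a) * c)" .
  then have "a^2 * ((pDp + 2 * qDp) * ((4 - a) * sD + (2 * a * b + (4 - a) * c)))
      = ((4 - a) * sD - (2 * a * b + (4 - a) * c)) * ((4 - a) * sD + (2 * a * b + (4 - a) * c))"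
    by (simp add: mult.assoc[symmetric])
  also have "\<dots> = (4 - a)^2 * sD^2 - (2 * a * b + (4 - a) * c)^2"
    by (simp add: algebra_simps power2_eq_square)
  also have "\<dots> = a^2 * F"
    unfolding sD_sq F_def by (simp add: DeltaD_def algebra_simps power2_eq_square)
  finally have conj: "(pDp + 2 * qDp) * ((4 - a) * sD + (2 * a * b + (4 - a) * c)) = F"
    using a_neg by simp
  have "(r * (4 - a) - b * (1 - a))^2
      = r^2 * (4 - a)^2 - 2 * r * (4 - a) * b * (1 - a) + b^2 * (1 - a)^2"
    by (simp add: algebra_simps power2_eq_square)
  then have key: "(1 - a) * F = (r * (4 - a) - b * (1 - a))^2 - b^2 * (1 - a)
      + (- b) * (1 - a) * (4 - a) * (c + b - 2 * r)"
    unfolding r_sq F_def by (simp add: algebra_simps power2_eq_square)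
  have "- b * (1 - a) \<le> r * (4 - a) - b * (1 - a)" using r_pos a_neg by simp
  then have "(- b * (1 - a))^2 \<le> (r * (4 - a) - b * (1 - a))^2"
    using a_neg b_neg by (intro power_mono) (auto simp: mult_nonpos_nonneg)
  moreover have "b^2 * (1 - a) < (- b * (1 - a))^2"
    using a_neg b_neg by (simp add: power2_eq_square)
  moreover have "0 \<le> (- b) * (1 - a) * (4 - a) * (c + b - 2 * r)"
    using assms a_neg b_neg unfolding cp_eq by (intro mult_nonneg_nonneg) auto
  ultimately have "0 < (1 - a) * F" unfolding key by linarith
  then have "0 < (pDp + 2 * qDp) * ((4 - a) * sD + (2 * a * b + (4 - a) * c))"
    unfolding conj using a_neg by (simp add: zero_less_mult_iff)
  moreover have "0 < (4 - a) * sD + (2 * a * b + (4 - a) * c)"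
    using a_neg b_neg c_pos c_lt_sD by (simp add: mult_neg_neg add_pos_pos)
  ultimately show ?thesis by (simp add: zero_less_mult_iff)
qed

lemma W_xDp_neg_of_ge_cp:
  assumes "cp a b d \<le> c" "2 \<le> n"
  shows "(-1) ^ n * W a b c d n (xDp a b c d) < 0"
proof -
  have "0 < qDp" using Deltag_lt_DeltaD[OF assms(1)] qDp_pos_iff by simp
  then have "2 * qDp \<le> real n * qDp" using assms(2) by (intro mult_right_mono) auto
  then have "0 < pDp + real n * qDp" using pDp_plus_2qDp_pos[OF assms(1)] by simp
  moreover have "1 \<le> n" using assms(2) by simp
  ultimately show ?thesis unfolding neg_one_pow_W_xDp[OF \<open>1 \<le> n\<close>] using pDp_neg by simp
qed

end

theorem lemma4p1:
  fixes a b c d :: real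
  assumes "a < 0" "b < 0" "d < 0" "0 < c"
  shows "xDm a b c d < xA a b \<and> xA a b < 0 \<and> 0 < xB c d
    \<and> xA a b < xDp a b c d \<and> xDp a b c d < xB c d
    \<and> a * xDm a b c d + b > 0 \<and> 0 > a * xDp a b c d + b
    \<and> (\<forall>n\<ge>1. (-1) ^ nat \<lceil>real n / 2\<rceil> * W a b c d n (xA a b) > 0
              \<and> (-1) ^ n * W a b c d n (xB c d) < 0
              \<and> W a b c d n (xDm a b c d) < 0)
    \<and> (c \<le> cm a b d \<longrightarrow>
          xDp a b c d \<le> xgm a b c d \<and> xgm a b c d \<le> xgp a b c d \<and> xgp a b c d < 0
        \<and> (\<forall>n\<ge>1. (-1) ^ n * W a b c d n (xgm a b c d) > 0
                  \<and> (-1) ^ n * W a b c d n (xgp a b c d) > 0)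
        \<and> (\<forall>n\<ge>1.
             (DeltaD a b c d > Deltag a b c d \<and> real n > nplus a b c d
                \<longrightarrow> (-1) ^ n * W a b c d n (xDp a b c d) < 0)
           \<and> (DeltaD a b c d > Deltag a b c d \<and> real n = nplus a b c d
                \<longrightarrow> (-1) ^ n * W a b c d n (xDp a b c d) = 0)
           \<and> (\<not> (DeltaD a b c d > Deltag a b c d \<and> real n \<ge> nplus a b c d)
                \<longrightarrow> (-1) ^ n * W a b c d n (xDp a b c d) > 0)))
    \<and> (c \<ge> cp a b d \<longrightarrow>
          xB c d < xgm a b c d
        \<and> (\<forall>n\<ge>1. W a b c d n (xgm a b c d) > 0 \<and> W a b c d n (xgp a b c d) > 0)
        \<and> (\<forall>n\<ge>2. (-1) ^ n * W a b c d n (xDp a b c d) < 0))"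
proof -
  interpret abd_neg_c_pos a b c d using assms by unfold_locales
  have "0 < a * xDm a b c d + b" "a * xDp a b c d + b < 0"
    using A_xDm pDm_pos A_xDp pDp_neg by simp_all
  then show ?thesis
    using xDm_lt_xA_lt_xDp xA_neg xB_pos xDp_lt_xB W_xA_sign W_xB_sign W_xDm_neg
      xDp_le_xgm xgm_le_xgp_c_outside xgp_neg neg_one_pow_W_xg_pos
      W_xDp_neg_beyond_nplus W_xDp_zero_at_nplus W_xDp_pos_before_nplus
      xB_lt_xgm W_xg_pos W_xDp_neg_of_ge_cp
    by simp
qed

end
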